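(* Let $S$ be a Hausdorff semitopological semigroup which is algebraically a primitive inverse semigroup, $S=\sum_{i\in\mathscr I}B_{\lambda_i}(G_i)$. Then: (i) for every $i\in\mathscr I$, $\alpha_i,\beta_i\in\lambda_i$ and every $(\alpha_i,g_i,\beta_i)\in(G_i)_{\alpha_i,\beta_i}$ there exists an open neighbourhood $U$ of $(\alpha_i,g_i,\beta_i)$ in $S$ with $U\subseteq (G_i)_{\alpha_i,\beta_i}$; hence every set $(G_i)_{\alpha_i,\beta_i}$ is open in $S$; (ii) every non-zero idempotent of $S$ is an isolated point of the subspace $E(S)$ of idempotents.
   Context: All spaces are Hausdorff; a semitopological semigroup is a Hausdorff space with separately continuous associative operation. For a group $G$ and a cardinal $\lambda\ge1$, the Brandt semigroup $B_\lambda(G)$ is $(\lambda\times G\times\lambda)\cup\{0\}$ with $(\alpha,a,\beta)(\gamma,b,\delta)=(\alpha,ab,\delta)$ if $\beta=\gamma$ and $0$ otherwise, $0$ being zero. The orthogonal sum of semigroups $T_\iota$ with zeros is $\{0\}\cup\bigcup_\iota(T_\iota\setminus\{0_\iota\})$ with products computed in $T_\iota$ when both factors lie in the same $T_\iota$ and the product is non-zero, and equal to $0$ otherwise. A primitive inverse semigroup is (up to isomorphism) exactly an orthogonal sum $\sum_{i\in\mathscr I}B_{\lambda_i}(G_i)$ of Brandt semigroups; we identify each $B_{\lambda_i}(G_i)$ with a subsemigroup of $S$ and write $(G_i)_{\alpha,\beta}=\{(\alpha,g,\beta):g\in G_i\}$ for $\alpha,\beta\in\lambda_i$. *)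

theory Defs
  imports "HOL-Analysis.Analysis" "HOL-Algebra.Group"
begin

text \<open>Elements of the orthogonal sum of Brandt semigroups B_{lambda_i}(G_i), i in I:
  the zero, or a triple (alpha, g, beta) tagged with its summand index i.\<close>
datatype ('i, 'a, 'g) bsum_elt = BZero | BElt 'i 'a 'g 'a

definition bsum_carrier ::
  "'i set \<Rightarrow> ('i \<Rightarrow> 'a set) \<Rightarrow> ('i \<Rightarrow> 'g monoid) \<Rightarrow> ('i, 'a, 'g) bsum_elt set" where
  "bsum_carrier I Lam G =
     insert BZero {BElt i \<alpha> g \<beta> | i \<alpha> g \<beta>. i \<in> I \<and> \<alpha> \<in> Lam i \<and> \<beta> \<in> Lam i \<and> g \<in> carrier (G i)}"

fun bsum_mult ::
  "('i \<Rightarrow> 'g monoid) \<Rightarrow> ('i, 'a, 'g) bsum_elt \<Rightarrow> ('i, 'a, 'g) bsum_elt \<Rightarrow> ('i, 'a, 'g) bsum_elt" where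
  "bsum_mult G (BElt i \<alpha> a \<beta>) (BElt j \<gamma> b \<delta>) =
     (if i = j \<and> \<beta> = \<gamma> then BElt i \<alpha> (a \<otimes>\<^bsub>G i\<^esub> b) \<delta> else BZero)"
| "bsum_mult G _ _ = BZero"

definition bsum_block ::
  "('i \<Rightarrow> 'g monoid) \<Rightarrow> 'i \<Rightarrow> 'a \<Rightarrow> 'a \<Rightarrow> ('i, 'a, 'g) bsum_elt set" where
  "bsum_block G i \<alpha> \<beta> = {BElt i \<alpha> g \<beta> | g. g \<in> carrier (G i)}"

definition bsum_idempotents ::
  "'i set \<Rightarrow> ('i \<Rightarrow> 'a set) \<Rightarrow> ('i \<Rightarrow> 'g monoid) \<Rightarrow> ('i, 'a, 'g) bsum_elt set" where
  "bsum_idempotents I Lam G = {e \<in> bsum_carrier I Lam G. bsum_mult G e e = e}"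

definition semitop_bsum ::
  "'i set \<Rightarrow> ('i \<Rightarrow> 'a set) \<Rightarrow> ('i \<Rightarrow> 'g monoid) \<Rightarrow> ('i, 'a, 'g) bsum_elt topology \<Rightarrow> bool" where
  "semitop_bsum I Lam G T \<longleftrightarrow>
     topspace T = bsum_carrier I Lam G \<and> Hausdorff_space T \<and>
     (\<forall>s \<in> bsum_carrier I Lam G.
        continuous_map T T (\<lambda>x. bsum_mult G s x) \<and> continuous_map T T (\<lambda>x. bsum_mult G x s))"

end

theory Submission
  imports Defs
begin

text \<open>Multiplying by the idempotents (\<alpha>,1,\<alpha>) on the left and (\<beta>,1,\<beta>) on the right is continuous
  and sends exactly the elements of the block (G_i)_{\<alpha>,\<beta>} to non-zero elements, so the block is
  the preimage of the complement of the closed point 0 and hence open; part (i) then holds with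
  U the block itself. A group has a single idempotent, so each block contains at most one
  idempotent of S, which gives part (ii).\<close>

lemma bsum_block_eq_sandwich_nonzero:
  assumes "i \<in> I" "\<alpha> \<in> Lam i" "\<beta> \<in> Lam i"
  shows "{s \<in> bsum_carrier I Lam G.
            bsum_mult G (bsum_mult G (BElt i \<alpha> u \<alpha>) s) (BElt i \<beta> v \<beta>) \<noteq> BZero}
         = bsum_block G i \<alpha> \<beta>"
  using assms by (auto simp: bsum_carrier_def bsum_block_def split: if_splits)

lemma openin_diff_Hausdorff_point:
  assumes "Hausdorff_space X" "a \<in> topspace X"
  shows "openin X (topspace X - {a})"
  using closedin_t1_singleton[OF Hausdorff_imp_t1_space[OF assms(1)] assms(2)]
  by (simp add: closedin_def)

lemma bsum_mult_BElt_idem_iff: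
  assumes "group (G i)" "h \<in> carrier (G i)"
  shows "bsum_mult G (BElt i \<alpha> h \<beta>) (BElt i \<alpha> h \<beta>) = BElt i \<alpha> h \<beta> \<longleftrightarrow> \<alpha> = \<beta> \<and> h = \<one>\<^bsub>G i\<^esub>"
proof -
  interpret group "G i" by (fact assms(1))
  have "h \<otimes>\<^bsub>G i\<^esub> h = h \<longleftrightarrow> h = \<one>\<^bsub>G i\<^esub>"
    using assms(2) l_cancel_one by fastforce
  then show ?thesis
    by simp
qed

lemma openin_bsum_block:
  assumes groups: "\<forall>i \<in> I. group (G i)"
    and semitop: "semitop_bsum I Lam G T"
    and i: "i \<in> I" "\<alpha> \<in> Lam i" "\<beta> \<in> Lam i"
  shows "openin T (bsum_block G i \<alpha> \<beta>)"
proof -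
  interpret group "G i" using groups i by blast
  let ?e = "BElt i \<alpha> \<one>\<^bsub>G i\<^esub> \<alpha>" and ?f = "BElt i \<beta> \<one>\<^bsub>G i\<^esub> \<beta>"
  let ?sandwich = "\<lambda>s. bsum_mult G (bsum_mult G ?e s) ?f"
  have top: "topspace T = bsum_carrier I Lam G" and Hausdorff: "Hausdorff_space T"
    using semitop by (auto simp: semitop_bsum_def)
  have "?e \<in> bsum_carrier I Lam G" "?f \<in> bsum_carrier I Lam G"
    using i by (auto simp: bsum_carrier_def)
  then have "continuous_map T T (bsum_mult G ?e)" "continuous_map T T (\<lambda>s. bsum_mult G s ?f)"
    using semitop by (auto simp: semitop_bsum_def)
  from continuous_map_compose[OF this]
  have sandwich: "continuous_map T T ?sandwich"
    by (simp add: o_def)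
  have "BZero \<in> topspace T"
    using top by (simp add: bsum_carrier_def)
  with Hausdorff have "openin T {s \<in> topspace T. ?sandwich s \<in> topspace T - {BZero}}"
    by (intro openin_continuous_map_preimage[OF sandwich] openin_diff_Hausdorff_point)
  moreover have "{s \<in> topspace T. ?sandwich s \<in> topspace T - {BZero}}
                 = {s \<in> topspace T. ?sandwich s \<noteq> BZero}"
    using continuous_map_image_subset_topspace[OF sandwich] by fast
  ultimately have "openin T {s \<in> topspace T. ?sandwich s \<noteq> BZero}"
    by (simp only:)
  then show ?thesis
    unfolding top bsum_block_eq_sandwich_nonzero[where I = I and Lam = Lam, OF i] .
qed

lemma bsum_block_inter_idempotents_singleton:
  assumes "group (G i)" and e: "e \<in> bsum_block G i \<alpha> \<beta> \<inter> bsum_idempotents I Lam G"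
  shows "bsum_block G i \<alpha> \<beta> \<inter> bsum_idempotents I Lam G = {e}"
proof -
  have unit: "x = BElt i \<alpha> \<one>\<^bsub>G i\<^esub> \<alpha>" if "x \<in> bsum_block G i \<alpha> \<beta> \<inter> bsum_idempotents I Lam G" for x
  proof -
    from that obtain h where "x = BElt i \<alpha> h \<beta>" "h \<in> carrier (G i)" "bsum_mult G x x = x"
      by (auto simp: bsum_block_def bsum_idempotents_def)
    with bsum_mult_BElt_idem_iff[where G = G and i = i, OF assms(1)] show ?thesis
      by metis
  qed
  show ?thesis
  proof (intro equalityI subsetI)
    fix x assume "x \<in> bsum_block G i \<alpha> \<beta> \<inter> bsum_idempotents I Lam G"
    then show "x \<in> {e}"
      using unit[OF e] unit by simp
  qed (use e in simp)
qed

theorem corollary2p3: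
  fixes I :: "'i set" and Lam :: "'i \<Rightarrow> 'a set" and G :: "'i \<Rightarrow> 'g monoid"
    and T :: "('i, 'a, 'g) bsum_elt topology"
  assumes groups: "\<forall>i \<in> I. group (G i)"
    and nonempty: "\<forall>i \<in> I. Lam i \<noteq> {}"
    and semitop: "semitop_bsum I Lam G T"
  shows "(\<forall>i \<in> I. \<forall>\<alpha> \<in> Lam i. \<forall>\<beta> \<in> Lam i. \<forall>g \<in> carrier (G i).
            \<exists>U. openin T U \<and> BElt i \<alpha> g \<beta> \<in> U \<and> U \<subseteq> bsum_block G i \<alpha> \<beta>)
       \<and> (\<forall>i \<in> I. \<forall>\<alpha> \<in> Lam i. \<forall>\<beta> \<in> Lam i. openin T (bsum_block G i \<alpha> \<beta>))
       \<and> (\<forall>e \<in> bsum_idempotents I Lam G. e \<noteq> BZero \<longrightarrow>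
            (\<exists>U. openin T U \<and> U \<inter> bsum_idempotents I Lam G = {e}))"
proof (intro conjI ballI impI)
  fix i \<alpha> \<beta> g assume "i \<in> I" "\<alpha> \<in> Lam i" "\<beta> \<in> Lam i" "g \<in> carrier (G i)"
  moreover from this have "BElt i \<alpha> g \<beta> \<in> bsum_block G i \<alpha> \<beta>"
    by (auto simp: bsum_block_def)
  ultimately show "\<exists>U. openin T U \<and> BElt i \<alpha> g \<beta> \<in> U \<and> U \<subseteq> bsum_block G i \<alpha> \<beta>"
    using openin_bsum_block[OF groups semitop] by blast
next
  fix i \<alpha> \<beta> assume "i \<in> I" "\<alpha> \<in> Lam i" "\<beta> \<in> Lam i"
  then show "openin T (bsum_block G i \<alpha> \<beta>)"
    by (rule openin_bsum_block[OF groups semitop])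
next
  fix e assume e: "e \<in> bsum_idempotents I Lam G" "e \<noteq> BZero"
  then obtain i \<alpha> g \<beta> where "e = BElt i \<alpha> g \<beta>" "g \<in> carrier (G i)"
    and i: "i \<in> I" "\<alpha> \<in> Lam i" "\<beta> \<in> Lam i"
    by (auto simp: bsum_idempotents_def bsum_carrier_def)
  then have "e \<in> bsum_block G i \<alpha> \<beta>"
    by (auto simp: bsum_block_def)
  with e groups i have "bsum_block G i \<alpha> \<beta> \<inter> bsum_idempotents I Lam G = {e}"
    by (intro bsum_block_inter_idempotents_singleton) auto
  with openin_bsum_block[OF groups semitop i]
  show "\<exists>U. openin T U \<and> U \<inter> bsum_idempotents I Lam G = {e}"
    by blast
qed

end
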